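(* Let $\boldsymbol\mu$ be a ratio set and let $\boldsymbol\alpha$ be a derivative addendum for $\boldsymbol\mu$. For all $S,T\in\mathbb T$ generated by $\boldsymbol\mu$: if $S\prec^{\boldsymbol\mu}T$, $T\not\asymp1$, and $\boldsymbol\mu$ witnesses $T$, then $S'\prec^{\boldsymbol\alpha}T'$.
   Context: $\mathbb T$ is the differential field of real grid-based transseries over the ordered group $\mathfrak G$ of transmonomials, with $\prec,\asymp$; $\operatorname{mag}T$ is the dominant monomial of $T\ne0$. A ratio set is a finite $\boldsymbol\mu=\{\mu_1,\dots,\mu_n\}\subset\{\mathfrak g\prec1\}$; $\boldsymbol\mu^*$, $\boldsymbol\mu^+$ are the sets $\boldsymbol\mu^{\mathbf k}$ with $\mathbf k\in\mathbb Z^n$, $\mathbf k\ge\mathbf 0$ (resp. additionally $\mathbf k\ne\mathbf0$); $\mathfrak J^{\boldsymbol\mu}$ is the group generated, $\mathfrak J^{\boldsymbol\mu,\mathbf m}=\{\boldsymbol\mu^{\mathbf k}:\mathbf k\ge\mathbf m\}$. Monomials: $\mathfrak m\prec^{\boldsymbol\mu}\mathfrak n$ iff $\mathfrak m/\mathfrak n\in\boldsymbol\mu^+$; transseries: $A\prec^{\boldsymbol\mu}B$ iff each $\mathfrak a\in\operatorname{supp}A$ is $\prec^{\boldsymbol\mu}$ some $\mathfrak b\in\operatorname{supp}B$. $\boldsymbol\alpha$ witnesses nonzero $T$ iff $\operatorname{supp}T\subseteq(\operatorname{mag}T)\boldsymbol\alpha^*$, and generates $T$ iff $\operatorname{supp}T\subseteq\mathfrak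 J^{\boldsymbol\alpha,\mathbf m}$ for some $\mathbf m$. A derivative addendum for $\boldsymbol\mu$ is a ratio set $\boldsymbol\alpha$ with: (a) $\boldsymbol\alpha^*\supseteq\boldsymbol\mu$; (b) for every $\mathfrak m\in\mathfrak J^{\boldsymbol\mu}$, $\mathfrak m'$ is witnessed and generated by $\boldsymbol\alpha$; (c) for all $\mathfrak m,\mathfrak n\in\mathfrak J^{\boldsymbol\mu}$ with $\mathfrak m\prec^{\boldsymbol\mu}\mathfrak n$, $\mathfrak n\ne1$: $\mathfrak m'\prec^{\boldsymbol\alpha}\operatorname{mag}(\mathfrak n')$. *)

theory Defs
  imports Complex_Main
begin

(* Monomials: an abstract linearly ordered abelian group 'g, written ADDITIVELY
   (think "logarithm of the monomial"): monomial product = +, monomial 1 = 0,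
   m \<prec> n  iff  m < n,  m \<preceq> n iff m \<le> n.
   Transseries: real coefficient functions 'g \<Rightarrow> real with grid-based support. *)

type_synonym 'g ser = "'g \<Rightarrow> real"

definition supp :: "'g ser \<Rightarrow> 'g set" where
  "supp S = {g. S g \<noteq> 0}"

definition mono :: "'g \<Rightarrow> 'g ser" where
  "mono g = (\<lambda>h. if h = g then 1 else 0)"

definition nsc :: "nat \<Rightarrow> 'g::ab_group_add \<Rightarrow> 'g" where
  "nsc n g = (((+) g) ^^ n) 0"

definition zsc :: "int \<Rightarrow> 'g::ab_group_add \<Rightarrow> 'g" where
  "zsc k g = (if 0 \<le> k then nsc (nat k) g else - nsc (nat (- k)) g)"

definition rpow :: "'g::ab_group_add set \<Rightarrow> ('g \<Rightarrow> int) \<Rightarrow> 'g" where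
  "rpow \<mu> k = (\<Sum>g\<in>\<mu>. zsc (k g) g)"

definition ratio_set :: "'g::linordered_ab_group_add set \<Rightarrow> bool" where
  "ratio_set \<mu> \<longleftrightarrow> finite \<mu> \<and> (\<forall>g\<in>\<mu>. g < 0)"

definition rstar :: "'g::ab_group_add set \<Rightarrow> 'g set" where
  "rstar \<mu> = {rpow \<mu> k | k. \<forall>g\<in>\<mu>. 0 \<le> k g}"

definition rplus :: "'g::ab_group_add set \<Rightarrow> 'g set" where
  "rplus \<mu> = {rpow \<mu> k | k. (\<forall>g\<in>\<mu>. 0 \<le> k g) \<and> (\<exists>g\<in>\<mu>. k g \<noteq> 0)}"

definition rgrp :: "'g::ab_group_add set \<Rightarrow> 'g set" where
  "rgrp \<mu> = {rpow \<mu> k | k. True}"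

definition rgrpm :: "'g::ab_group_add set \<Rightarrow> ('g \<Rightarrow> int) \<Rightarrow> 'g set" where
  "rgrpm \<mu> m = {rpow \<mu> k | k. \<forall>g\<in>\<mu>. m g \<le> k g}"

definition mprec :: "'g::ab_group_add set \<Rightarrow> 'g \<Rightarrow> 'g \<Rightarrow> bool" where
  "mprec \<mu> m n \<longleftrightarrow> m - n \<in> rplus \<mu>"

definition sprec :: "'g::ab_group_add set \<Rightarrow> 'g ser \<Rightarrow> 'g ser \<Rightarrow> bool" where
  "sprec \<mu> A B \<longleftrightarrow> (\<forall>a\<in>supp A. \<exists>b\<in>supp B. mprec \<mu> a b)"

definition mag :: "'g::linorder ser \<Rightarrow> 'g" where
  "mag T = (GREATEST g. g \<in> supp T)"

definition asymp_one :: "'g::linordered_ab_group_add ser \<Rightarrow> bool" where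
  "asymp_one T \<longleftrightarrow> T \<noteq> (\<lambda>_. 0) \<and> mag T = 0"

definition witnesses :: "'g::linordered_ab_group_add set \<Rightarrow> 'g ser \<Rightarrow> bool" where
  "witnesses \<alpha> T \<longleftrightarrow> T \<noteq> (\<lambda>_. 0) \<and> supp T \<subseteq> (\<lambda>g. mag T + g) ` rstar \<alpha>"

definition generates :: "'g::ab_group_add set \<Rightarrow> 'g ser \<Rightarrow> bool" where
  "generates \<alpha> T \<longleftrightarrow> (\<exists>m. supp T \<subseteq> rgrpm \<alpha> m)"

definition grid_based :: "'g::linordered_ab_group_add ser \<Rightarrow> bool" where
  "grid_based T \<longleftrightarrow> (\<exists>G m. finite G \<and> (\<forall>g\<in>G. g < 0) \<and> supp T \<subseteq> (\<lambda>g. m + g) ` rstar G)"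

(* Strongly linear extension of a derivation given on monomials: d m = m'.
   (S')_h = \<Sum>_{m \<in> supp S} S_m (m')_h  (the sum is finite by strong summability). *)
definition sder :: "('g \<Rightarrow> 'g ser) \<Rightarrow> 'g ser \<Rightarrow> 'g ser" where
  "sder d S = (\<lambda>h. \<Sum>m\<in>{m\<in>supp S. d m h \<noteq> 0}. S m * d m h)"

(* Abstract description of the transseries derivation on monomials:
   m' is a grid-based series, 1' = 0, m' \<noteq> 0 for m \<noteq> 1, Leibniz rule on
   monomials, and the strongly linear extension to grid-based series is
   well-defined (strongly summable) and lands in grid-based series. *)
definition transseries_derivation :: "('g::linordered_ab_group_add \<Rightarrow> 'g ser) \<Rightarrow> bool" where
  "transseries_derivation d \<longleftrightarrow>
     (\<forall>g. grid_based (d g)) \<and>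
     d 0 = (\<lambda>_. 0) \<and>
     (\<forall>g. g \<noteq> 0 \<longrightarrow> d g \<noteq> (\<lambda>_. 0)) \<and>
     (\<forall>m n. d (m + n) = (\<lambda>h. d m (h - n) + d n (h - m))) \<and>
     (\<forall>S. grid_based S \<longrightarrow>
          (\<forall>h. finite {m\<in>supp S. d m h \<noteq> 0}) \<and> grid_based (sder d S))"

definition deriv_addendum ::
  "('g::linordered_ab_group_add \<Rightarrow> 'g ser) \<Rightarrow> 'g set \<Rightarrow> 'g set \<Rightarrow> bool" where
  "deriv_addendum d \<mu> \<alpha> \<longleftrightarrow>
     ratio_set \<alpha> \<and>
     \<mu> \<subseteq> rstar \<alpha> \<and>
     (\<forall>m\<in>rgrp \<mu>. (d m \<noteq> (\<lambda>_. 0) \<longrightarrow> witnesses \<alpha> (d m)) \<and> generates \<alpha> (d m)) \<and>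
     (\<forall>m\<in>rgrp \<mu>. \<forall>n\<in>rgrp \<mu>. mprec \<mu> m n \<and> n \<noteq> 0 \<longrightarrow>
          sprec \<alpha> (d m) (mono (mag (d n))))"

end

theory Submission
  imports Defs
begin

text \<open>
  Let t be the dominant monomial of T. Since \<mu> witnesses T, every other monomial m of T satisfies
  m \<prec>\<mu> t, so by condition (c) of a derivative addendum every monomial of m' lies strictly
  below the dominant monomial of t' in the \<alpha>-order; hence that monomial receives a contribution
  from t' alone and survives in T'. Likewise every monomial s of S satisfies s \<prec>\<mu> t, so
  every monomial of s', and thus of S', is \<prec>\<alpha> the dominant monomial of t'.
  That T and t' have dominant monomials at all rests on grids being reverse well-ordered, a form
  of Dickson's lemma.
\<close>

lemma nsc_0 [simp]: "nsc 0 g = 0"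
  by (simp add: nsc_def)

lemma nsc_Suc [simp]: "nsc (Suc n) g = g + nsc n g"
  by (simp add: nsc_def)

lemma nsc_add: "nsc (m + n) g = nsc m g + nsc n g"
  by (induction m) (simp_all add: nsc_def add.assoc)

lemma nsc_nonpos: "(g::'g::linordered_ab_group_add) \<le> 0 \<Longrightarrow> nsc n g \<le> 0"
  by (induction n) (simp_all add: nsc_def add_nonpos_nonpos)

lemma nsc_neg: "(g::'g::linordered_ab_group_add) < 0 \<Longrightarrow> 0 < n \<Longrightarrow> nsc n g < 0"
  by (cases n) (simp_all add: add_neg_nonpos nsc_nonpos)

lemma nsc_antimono:
  assumes "(g::'g::linordered_ab_group_add) \<le> 0" "m \<le> n"
  shows "nsc n g \<le> nsc m g"
proof -
  obtain p where "n = m + p" using \<open>m \<le> n\<close> le_Suc_ex by blast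
  then show ?thesis using nsc_nonpos[OF \<open>g \<le> 0\<close>, of p] by (simp add: nsc_add)
qed

lemma zsc_nonneg: "0 \<le> k \<Longrightarrow> zsc k g = nsc (nat k) g"
  by (simp add: zsc_def)

lemma rpow_add:
  assumes "\<forall>g\<in>\<mu>. 0 \<le> k g" "\<forall>g\<in>\<mu>. 0 \<le> k' g"
  shows "rpow \<mu> k + rpow \<mu> k' = rpow \<mu> (\<lambda>g. k g + k' g)"
  unfolding rpow_def sum.distrib[symmetric]
  by (rule sum.cong) (use assms in \<open>auto simp: zsc_nonneg nat_add_distrib nsc_add\<close>)

lemma rplus_add_rstar:
  assumes "x \<in> rplus \<mu>" "y \<in> rstar \<mu>"
  shows "x + y \<in> rplus \<mu>"
proof -
  obtain k where k: "x = rpow \<mu> k" "\<forall>g\<in>\<mu>. 0 \<le> k g" "\<exists>g\<in>\<mu>. k g \<noteq> 0"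
    using assms(1) unfolding rplus_def by blast
  obtain k' where k': "y = rpow \<mu> k'" "\<forall>g\<in>\<mu>. 0 \<le> k' g"
    using assms(2) unfolding rstar_def by blast
  have "x + y = rpow \<mu> (\<lambda>g. k g + k' g)"
    using k k' rpow_add by metis
  moreover have "\<exists>g\<in>\<mu>. k g + k' g \<noteq> 0"
    using k k' by (metis add_nonneg_eq_0_iff)
  ultimately show ?thesis
    using k k' unfolding rplus_def by force
qed

lemma rstar_nonzero_in_rplus:
  assumes "x \<in> rstar \<mu>" "x \<noteq> 0"
  shows "x \<in> rplus \<mu>"
proof -
  obtain k where k: "x = rpow \<mu> k" "\<forall>g\<in>\<mu>. 0 \<le> k g"
    using assms(1) unfolding rstar_def by blast
  have "rpow \<mu> k = 0" if "\<forall>g\<in>\<mu>. k g = 0"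
    using that unfolding rpow_def by (simp add: zsc_def)
  with k assms(2) have "\<exists>g\<in>\<mu>. k g \<noteq> 0"
    by blast
  with k show ?thesis
    unfolding rplus_def by blast
qed

lemma rplus_neg:
  assumes "ratio_set \<mu>" "x \<in> rplus \<mu>"
  shows "x < 0"
proof -
  obtain k g0 where k: "x = rpow \<mu> k" "\<forall>g\<in>\<mu>. 0 \<le> k g" and g0: "g0 \<in> \<mu>" "k g0 \<noteq> 0"
    using assms(2) unfolding rplus_def by blast
  have fin: "finite \<mu>" and neg: "\<forall>g\<in>\<mu>. g < 0"
    using assms(1) unfolding ratio_set_def by auto
  have "rpow \<mu> k = zsc (k g0) g0 + (\<Sum>g\<in>\<mu>-{g0}. zsc (k g) g)"
    unfolding rpow_def using fin g0 by (simp add: sum.remove)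
  moreover have "zsc (k g0) g0 < 0"
    using k g0 neg by (auto simp: zsc_nonneg intro!: nsc_neg)
  moreover have "(\<Sum>g\<in>\<mu>-{g0}. zsc (k g) g) \<le> 0"
    using k neg by (auto simp: zsc_nonneg less_imp_le intro!: sum_nonpos nsc_nonpos)
  ultimately show ?thesis
    using k by (simp add: add_neg_nonpos)
qed

lemma mprec_irrefl: "ratio_set \<mu> \<Longrightarrow> \<not> mprec \<mu> m m"
  unfolding mprec_def using rplus_neg by fastforce

lemma mprec_rstar_trans:
  "mprec \<mu> m n \<Longrightarrow> n - t \<in> rstar \<mu> \<Longrightarrow> mprec \<mu> m t"
  unfolding mprec_def using rplus_add_rstar by fastforce

lemma rstar_insert:
  assumes "finite G" "g \<notin> G" "x \<in> rstar (insert g G)"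
  shows "\<exists>n y. y \<in> rstar G \<and> x = nsc n g + y"
proof -
  obtain k where k: "x = rpow (insert g G) k" "\<forall>h\<in>insert g G. 0 \<le> k h"
    using assms(3) unfolding rstar_def by blast
  have "x = zsc (k g) g + rpow G k"
    using k assms(1,2) unfolding rpow_def by simp
  moreover have "rpow G k \<in> rstar G"
    using k unfolding rstar_def by auto
  ultimately show ?thesis
    using k by (auto simp: zsc_nonneg)
qed

lemma nat_seq_incseq_subseq:
  fixes s :: "nat \<Rightarrow> nat"
  obtains f where "strict_mono f" "incseq (\<lambda>i. s (f i))"
proof -
  obtain f where f: "strict_mono f" "monoseq (\<lambda>i. s (f i))"
    using seq_monosub[of s] by blast
  show ?thesis
  proof (cases "incseq (\<lambda>i. s (f i))")
    case True
    with f(1) show ?thesis by (rule that)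
  next
    case False
    with f(2) have dec: "decseq (\<lambda>i. s (f i))"
      unfolding monoseq_iff by blast
    obtain N where N: "\<And>i. s (f N) \<le> s (f i)"
      using ex_has_least_nat[of "\<lambda>_. True" 0 "\<lambda>i. s (f i)"] by auto
    have const: "s (f (N + i)) = s (f N)" for i
      using decseqD[OF dec, of N "N + i"] N[of "N + i"] by simp
    have "strict_mono (\<lambda>i. f (N + i))"
      using f(1) by (simp add: strict_mono_def)
    moreover have "incseq (\<lambda>i. s (f (N + i)))"
      by (simp add: const incseq_def)
    ultimately show ?thesis by (rule that)
  qed
qed

lemma rstar_no_strict_mono_seq:
  fixes G :: "'g::linordered_ab_group_add set" and x :: "nat \<Rightarrow> 'g"
  assumes "finite G" "\<forall>g\<in>G. g \<le> 0" "\<forall>i. x i \<in> rstar G"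
  shows "\<not> strict_mono x"
  using assms
proof (induction G arbitrary: x rule: finite_induct)
  case empty
  then have "x 0 = x 1"
    by (simp add: rstar_def rpow_def)
  then show ?case
    by (metis strict_mono_less less_irrefl zero_less_one)
next
  case (insert g G)
  have "\<forall>i. \<exists>n y. y \<in> rstar G \<and> x i = nsc n g + y"
    using rstar_insert[OF insert.hyps(1,2)] insert.prems(2) by blast
  then obtain n y where ny: "\<And>i. y i \<in> rstar G" "\<And>i. x i = nsc (n i) g + y i"
    by metis
  obtain h where h: "strict_mono h" "incseq (\<lambda>i. n (h i))"
    by (rule nat_seq_incseq_subseq)
  have g: "g \<le> 0" using insert.prems(1) by simp
  show ?case
  proof
    assume "strict_mono x"
    \<comment> \<open>Along h the g-part of x can only decrease, so the rest must strictly increase.\<close>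
    have "strict_mono (\<lambda>i. y (h i))"
    proof (rule strict_monoI)
      fix i j :: nat assume "i < j"
      then have "x (h i) < x (h j)"
        using \<open>strict_mono x\<close> h(1) by (simp add: strict_monoD)
      moreover have "nsc (n (h j)) g \<le> nsc (n (h i)) g"
        using nsc_antimono[OF g] incseqD[OF h(2), of i j] \<open>i < j\<close> by simp
      ultimately show "y (h i) < y (h j)"
        using add_mono[of "nsc (n (h j)) g" "nsc (n (h i)) g" "y (h j)" "y (h i)"]
        unfolding ny(2)[of "h i"] ny(2)[of "h j"] by (meson not_le order.strict_trans2)
    qed
    then show False
      using insert.IH[of "\<lambda>i. y (h i)"] insert.prems(1) ny(1) by simp
  qed
qed

lemma rstar_has_greatest:
  fixes G :: "'g::linordered_ab_group_add set"
  assumes "finite G" "\<forall>g\<in>G. g \<le> 0" "A \<subseteq> rstar G" "a \<in> A"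
  obtains z where "z \<in> A" "\<And>b. b \<in> A \<Longrightarrow> b \<le> z"
proof -
  define R where "R = {(b, a). a \<in> rstar G \<and> b \<in> rstar G \<and> a < b}"
  have "wf R"
    unfolding wf_iff_no_infinite_down_chain
  proof
    assume "\<exists>x. \<forall>i. (x (Suc i), x i) \<in> R"
    then obtain x :: "nat \<Rightarrow> 'g" where "\<forall>i. (x (Suc i), x i) \<in> R" ..
    then have "\<forall>i. x i \<in> rstar G" "strict_mono x"
      unfolding R_def by (auto simp: strict_mono_Suc_iff)
    with assms(1,2) show False
      using rstar_no_strict_mono_seq by blast
  qed
  then obtain z where z: "z \<in> A" "\<And>b. (b, z) \<in> R \<Longrightarrow> b \<notin> A"
    using wfE_min[of R a A] assms(4) by blast
  show ?thesis
  proof (rule that)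
    show "z \<in> A" by fact
    fix b assume "b \<in> A"
    show "b \<le> z"
    proof (rule ccontr)
      assume "\<not> b \<le> z"
      with \<open>b \<in> A\<close> \<open>z \<in> A\<close> assms(3) have "(b, z) \<in> R"
        unfolding R_def by auto
      with z(2) \<open>b \<in> A\<close> show False by blast
    qed
  qed
qed

lemma grid_based_mag:
  fixes T :: "'g::linordered_ab_group_add ser"
  assumes "grid_based T" "T \<noteq> (\<lambda>_. 0)"
  shows "mag T \<in> supp T" "\<And>m. m \<in> supp T \<Longrightarrow> m \<le> mag T"
proof -
  obtain G c where G: "finite G" "\<forall>g\<in>G. g < 0" "supp T \<subseteq> (\<lambda>g. c + g) ` rstar G"
    using assms(1) unfolding grid_based_def by blast
  obtain t where t: "t \<in> supp T"
    using assms(2) unfolding supp_def by auto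
  define A where "A = {a \<in> rstar G. c + a \<in> supp T}"
  have "t - c \<in> A"
    using t G(3) unfolding A_def by auto
  moreover have "\<forall>g\<in>G. g \<le> 0"
    using G(2) by (simp add: less_imp_le)
  ultimately obtain z where z: "z \<in> A" "\<And>b. b \<in> A \<Longrightarrow> b \<le> z"
    using rstar_has_greatest[OF G(1), of A] unfolding A_def by blast
  have greatest: "c + z \<in> supp T" "\<And>m. m \<in> supp T \<Longrightarrow> m \<le> c + z"
  proof -
    show "c + z \<in> supp T"
      using z(1) unfolding A_def by simp
    fix m assume "m \<in> supp T"
    with G(3) obtain b where "b \<in> rstar G" "m = c + b"
      by blast
    with \<open>m \<in> supp T\<close> z(2)[of b] show "m \<le> c + z"
      unfolding A_def by simp
  qed
  then have "mag T = c + z"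
    unfolding mag_def by (intro Greatest_equality)
  with greatest show "mag T \<in> supp T" "\<And>m. m \<in> supp T \<Longrightarrow> m \<le> mag T"
    by simp_all
qed

lemma supp_mono [simp]: "supp (mono g) = {g}"
  unfolding supp_def mono_def by auto

lemma supp_sderE:
  assumes "h \<in> supp (sder d S)"
  obtains s where "s \<in> supp S" "h \<in> supp (d s)"
proof -
  have "{s \<in> supp S. d s h \<noteq> 0} \<noteq> {}"
  proof
    assume "{s \<in> supp S. d s h \<noteq> 0} = {}"
    then have "sder d S h = 0"
      unfolding sder_def by simp
    with assms show False
      unfolding supp_def by simp
  qed
  then show ?thesis
    using that unfolding supp_def by blast
qed

lemma in_supp_sder_single_contribution:
  assumes "t \<in> supp T" "h \<in> supp (d t)" "\<And>m. m \<in> supp T \<Longrightarrow> m \<noteq> t \<Longrightarrow> d m h = 0"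
  shows "h \<in> supp (sder d T)"
proof -
  have "{m \<in> supp T. d m h \<noteq> 0} = {t}"
    using assms unfolding supp_def by auto
  then have "sder d T h = T t * d t h"
    unfolding sder_def by simp
  with assms(1,2) show ?thesis
    unfolding supp_def by simp
qed

lemma generates_supp_subset_rgrp: "generates \<mu> T \<Longrightarrow> supp T \<subseteq> rgrp \<mu>"
  unfolding generates_def rgrpm_def rgrp_def by blast

lemma deriv_addendum_mprec_mag:
  assumes "deriv_addendum d \<mu> \<alpha>" "m \<in> rgrp \<mu>" "n \<in> rgrp \<mu>" "mprec \<mu> m n" "n \<noteq> 0"
    and "h \<in> supp (d m)"
  shows "mprec \<alpha> h (mag (d n))"
proof -
  have "sprec \<alpha> (d m) (mono (mag (d n)))"
    using assms(1-5) unfolding deriv_addendum_def by blast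
  with assms(6) show ?thesis
    unfolding sprec_def by simp
qed

lemma sder_mag_in_supp:
  assumes "transseries_derivation d" "deriv_addendum d \<mu> \<alpha>"
    and "grid_based T" "witnesses \<mu> T" "generates \<mu> T" "\<not> asymp_one T"
  shows "mag (d (mag T)) \<in> supp (sder d T)"
proof -
  define t where "t = mag T"
  have T: "T \<noteq> (\<lambda>_. 0)" "supp T \<subseteq> (\<lambda>g. t + g) ` rstar \<mu>"
    using assms(4) unfolding witnesses_def t_def by auto
  have "t \<in> supp T"
    using grid_based_mag(1)[OF assms(3) T(1)] unfolding t_def .
  have "t \<noteq> 0"
    using assms(6) T(1) unfolding asymp_one_def t_def by blast
  then have "d t \<noteq> (\<lambda>_. 0)" "grid_based (d t)"
    using assms(1) unfolding transseries_derivation_def by auto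
  then have "mag (d t) \<in> supp (d t)"
    by (rule grid_based_mag(1)[rotated])
  moreover have "d m (mag (d t)) = 0" if "m \<in> supp T" "m \<noteq> t" for m
  proof (rule ccontr)
    assume "d m (mag (d t)) \<noteq> 0"
    then have "mag (d t) \<in> supp (d m)"
      unfolding supp_def by simp
    have "m - t \<in> rstar \<mu>"
      using T(2) \<open>m \<in> supp T\<close> by auto
    with \<open>m \<noteq> t\<close> have "mprec \<mu> m t"
      unfolding mprec_def by (simp add: rstar_nonzero_in_rplus)
    with assms(2) have "mprec \<alpha> (mag (d t)) (mag (d t))"
      using generates_supp_subset_rgrp[OF assms(5)] \<open>m \<in> supp T\<close> \<open>t \<in> supp T\<close> \<open>t \<noteq> 0\<close>
        \<open>mag (d t) \<in> supp (d m)\<close>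
      by (blast intro: deriv_addendum_mprec_mag)
    with assms(2) show False
      using mprec_irrefl unfolding deriv_addendum_def by blast
  qed
  ultimately have "mag (d t) \<in> supp (sder d T)"
    by (rule in_supp_sder_single_contribution[OF \<open>t \<in> supp T\<close>])
  then show ?thesis
    unfolding t_def .
qed

theorem proposition4p8:
  fixes d :: "'g::linordered_ab_group_add \<Rightarrow> 'g ser"
    and \<mu> \<alpha> :: "'g set"
    and S T :: "'g ser"
  assumes "transseries_derivation d"
    and "ratio_set \<mu>"
    and "deriv_addendum d \<mu> \<alpha>"
    and "grid_based S" and "grid_based T"
    and "generates \<mu> S" and "generates \<mu> T"
    and "sprec \<mu> S T"
    and "\<not> asymp_one T"
    and "witnesses \<mu> T"
  shows "sprec \<alpha> (sder d S) (sder d T)"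
  unfolding sprec_def
proof
  fix h assume "h \<in> supp (sder d S)"
  then obtain s where s: "s \<in> supp S" "h \<in> supp (d s)"
    by (rule supp_sderE)
  obtain b where b: "b \<in> supp T" "mprec \<mu> s b"
    using assms(8) s(1) unfolding sprec_def by blast
  have T: "T \<noteq> (\<lambda>_. 0)" "supp T \<subseteq> (\<lambda>g. mag T + g) ` rstar \<mu>"
    using assms(10) unfolding witnesses_def by auto
  with b have "mprec \<mu> s (mag T)"
    using mprec_rstar_trans by fastforce
  moreover have "mag T \<in> supp T" "mag T \<noteq> 0"
    using grid_based_mag(1)[OF assms(5) T(1)] assms(9) T(1) unfolding asymp_one_def by auto
  ultimately have "mprec \<alpha> h (mag (d (mag T)))"
    using deriv_addendum_mprec_mag[OF assms(3)] s generates_supp_subset_rgrp[OF assms(6)]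
      generates_supp_subset_rgrp[OF assms(7)] by blast
  with sder_mag_in_supp[OF assms(1,3,5,10,7,9)]
  show "\<exists>b\<in>supp (sder d T). mprec \<alpha> h b" by blast
qed

end
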